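(* Let $q>0$ and $c=\sqrt q$. The solution of the Volterra lattice $u'_j=u_j(u_{j+1}-u_{j-1})$, $j\in\mathbb Z$, with initial data at $t=0$ given by $u_j=0$ for $j\le0$, $u_1=u_3=u_5=\dots=1$, $u_2=u_4=\dots=q$, has first component $u_1=f'_1/f_1$ with $$f_1=1+\int_0^t{}_1F_1\bigl(\tfrac32,3,4cx\bigr)e^{(c-1)^2x}\,dx.$$
   Context: $f'=df/dt$. ${}_1F_1(a,b,z)=\sum_{n\ge0}\frac{(a)_n}{(b)_n}\frac{z^n}{n!}$ with $(a)_n=a(a+1)\cdots(a+n-1)$, $(a)_0=1$. *)

theory Defs
  imports "HOL-Analysis.Analysis"
begin

definition hyp1F1 :: "real \<Rightarrow> real \<Rightarrow> real \<Rightarrow> real" where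
  "hyp1F1 a b z = (\<Sum>n. pochhammer a n / pochhammer b n * z ^ n / fact n)"

end

theory Submission
  imports Defs "HOL-Computational_Algebra.Formal_Power_Series"
begin

text \<open>The moments \<open>m\<^sub>k(t)\<close>, sums over Dyck paths of length \<open>2k\<close> of products of the
  \<open>u\<^sub>j(t)\<close>, satisfy \<open>m\<^sub>1 = u\<^sub>1\<close> and, along the Volterra flow (on which \<open>u\<^sub>0\<close> stays \<open>0\<close>),
  \<open>m\<^sub>k' = m\<^sub>k\<^sub>+\<^sub>1 - m\<^sub>1 m\<^sub>k\<close>. Let \<open>S\<^sub>0\<close> be the exponential generating function of the initial
  moments \<open>a\<^sub>k = m\<^sub>k(0)\<close> and \<open>S\<^sub>k\<close> its \<open>k\<close>-th derivative. Then \<open>F\<^sub>k = m\<^sub>k S\<^sub>0 - S\<^sub>k\<close>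
  vanishes at \<open>0\<close> and solves \<open>F\<^sub>k' = F\<^sub>k\<^sub>+\<^sub>1 - m\<^sub>k F\<^sub>1\<close>; since a bounded solution has
  \<open>|m\<^sub>k| \<le> R\<^sup>k\<close>, this forces \<open>F = 0\<close>, i.e. \<open>u\<^sub>1 = S\<^sub>0'/S\<^sub>0\<close>.

  For the 2-periodic initial weights \<open>1, q, 1, q, \<dots>\<close> the ordinary generating function of
  \<open>a\<^sub>k\<close> satisfies a quadratic equation, which yields a three-term recurrence for \<open>a\<^sub>k\<close>. The
  Taylor coefficients of \<open>\<^sub>1F\<^sub>1(3/2, 3, 4cx) exp((c - 1)\<^sup>2 x)\<close> obey the same
  recurrence, so this function is \<open>S\<^sub>1 = S\<^sub>0'\<close> and \<open>S\<^sub>0 = f\<^sub>1\<close>.\<close>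

section \<open>Weighted Dyck paths\<close>

text \<open>\<open>dyck_weight w n h\<close> is the total weight of the lattice paths with \<open>n\<close> up and down
  steps from height \<open>0\<close> to height \<open>h\<close> staying nonnegative, a down step from height \<open>i\<close>
  having weight \<open>w i\<close>. Hence \<open>dyck_weight w (2 * k) 0\<close> is the \<open>k\<close>-th moment of the
  Stieltjes continued fraction with coefficients \<open>w 1, w 2, \<dots>\<close>.\<close>
fun dyck_weight :: "(nat \<Rightarrow> real) \<Rightarrow> nat \<Rightarrow> nat \<Rightarrow> real" where
  "dyck_weight w 0 h = (if h = 0 then 1 else 0)"
| "dyck_weight w (Suc n) h =
     (if h = 0 then 0 else dyck_weight w n (h - 1)) + w (h + 1) * dyck_weight w n (h + 1)"

lemma dyck_weight_cong:
  "(\<And>h. 1 \<le> h \<Longrightarrow> w h = w' h) \<Longrightarrow> dyck_weight w n h = dyck_weight w' n h"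
  by (induction n arbitrary: h) auto

lemma dyck_weight_nonneg: "(\<And>h. 0 \<le> w h) \<Longrightarrow> 0 \<le> dyck_weight w n h"
  by (induction n arbitrary: h) auto

lemma abs_dyck_weight_le:
  assumes w: "\<And>h. \<bar>w h\<bar> \<le> K" and K: "1 \<le> K"
  shows "\<bar>dyck_weight w n h\<bar> \<le> (2 * K) ^ n"
proof (induction n arbitrary: h)
  case 0
  then show ?case using K by simp
next
  case (Suc n)
  have "0 \<le> (2 * K) ^ n" using K by simp
  then have down: "\<bar>if h = 0 then 0 else dyck_weight w n (h - 1)\<bar> \<le> (2 * K) ^ n"
    using Suc.IH by auto
  have up: "\<bar>w (h + 1) * dyck_weight w n (h + 1)\<bar> \<le> K * (2 * K) ^ n"
    unfolding abs_mult using w Suc.IH K by (intro mult_mono) auto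
  have "\<bar>dyck_weight w (Suc n) h\<bar> \<le> (2 * K) ^ n + K * (2 * K) ^ n"
    using abs_triangle_ineq down up by (simp only: dyck_weight.simps)
  also have "\<dots> \<le> (2 * K) ^ Suc n" using K by (simp add: algebra_simps)
  finally show ?case .
qed

lemma dyck_weight_odd: "odd (n + h) \<Longrightarrow> dyck_weight w n h = 0"
proof (induction n arbitrary: h)
  case 0
  then show ?case by (cases h) auto
next
  case (Suc n)
  then show ?case by (cases h) auto
qed

lemma dyck_weight_2_0: "dyck_weight w 2 0 = w 1"
  by (simp add: numeral_2_eq_2)

lemma dyck_weight_Suc_Suc_0:
  "dyck_weight w (Suc (Suc n)) 0 = w 1 * (dyck_weight w n 0 + w 2 * dyck_weight w n 2)"
  by (simp add: numeral_2_eq_2)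

text \<open>Decomposition of a path ending at height \<open>h + 1\<close> at its last visit to height \<open>0\<close>.\<close>
lemma dyck_weight_last_zero:
  "dyck_weight w (Suc n) (Suc h) =
     (\<Sum>m\<le>n. dyck_weight w m 0 * dyck_weight (\<lambda>i. w (Suc i)) (n - m) h)"
proof (induction n arbitrary: h)
  case 0
  then show ?case by simp
next
  case (Suc n)
  let ?v = "\<lambda>i. w (Suc i)"
  have step: "dyck_weight w (Suc (Suc n)) (Suc h) =
      dyck_weight w (Suc n) h + w (h + 2) * dyck_weight w (Suc n) (h + 2)"
    by simp
  show ?case
  proof (cases h)
    case 0
    have "(\<Sum>m\<le>Suc n. dyck_weight w m 0 * dyck_weight ?v (Suc n - m) h) =
        (\<Sum>m\<le>n. w 2 * (dyck_weight w m 0 * dyck_weight ?v (n - m) 1)) + dyck_weight w (Suc n) 0"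
      using 0 by (simp add: Suc_diff_le numeral_2_eq_2 mult.left_commute)
    also have "\<dots> = w 2 * dyck_weight w (Suc n) 2 + dyck_weight w (Suc n) 0"
      using Suc.IH[of 1] by (simp add: sum_distrib_left eval_nat_numeral)
    finally show ?thesis using step 0 by (simp add: eval_nat_numeral)
  next
    case (Suc h')
    have "(\<Sum>m\<le>Suc n. dyck_weight w m 0 * dyck_weight ?v (Suc n - m) h) =
        (\<Sum>m\<le>n. dyck_weight w m 0 * dyck_weight ?v (n - m) h')
        + w (h + 2) * (\<Sum>m\<le>n. dyck_weight w m 0 * dyck_weight ?v (n - m) (h + 1))"
      using Suc by (simp add: sum_distrib_left sum.distrib[symmetric] Suc_diff_le algebra_simps)
    also have "\<dots> = dyck_weight w (Suc n) h + w (h + 2) * dyck_weight w (Suc n) (h + 2)"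
      using Suc.IH[of h'] Suc.IH[of "h + 1"] Suc by simp
    finally show ?thesis using step by simp
  qed
qed

lemma dyck_weight_even_Suc:
  "dyck_weight w (2 * Suc k) 0 =
     w 1 * (\<Sum>i\<le>k. dyck_weight w (2 * i) 0 * dyck_weight (\<lambda>i. w (Suc i)) (2 * (k - i)) 0)"
proof -
  let ?f = "\<lambda>m. dyck_weight w m 0 * dyck_weight (\<lambda>i. w (Suc i)) (2 * k - m) 0"
  have "dyck_weight w (2 * Suc k) 0 = w 1 * dyck_weight w (Suc (2 * k)) 1" by simp
  also have "dyck_weight w (Suc (2 * k)) 1 = (\<Sum>m\<le>2 * k. ?f m)"
    using dyck_weight_last_zero[of w "2 * k" 0] by simp
  also have "\<dots> = (\<Sum>m<2 * Suc k. ?f m)"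
  proof -
    have "{..<2 * Suc k} = insert (Suc (2 * k)) {..2 * k}" by auto
    then show ?thesis using dyck_weight_odd[of "Suc (2 * k)" 0 w] by simp
  qed
  also have "\<dots> = (\<Sum>m<2 * Suc k. if even m then ?f m else 0)"
    by (intro sum.cong refl) (auto simp: dyck_weight_odd)
  also have "\<dots> = (\<Sum>i<Suc k. ?f (2 * i))"
    using sum_split_even_odd[of ?f "\<lambda>_. 0" "Suc k"] by simp
  also have "\<dots> = (\<Sum>i\<le>k. dyck_weight w (2 * i) 0 * dyck_weight (\<lambda>i. w (Suc i)) (2 * (k - i)) 0)"
    by (intro sum.cong) (auto simp: right_diff_distrib')
  finally show ?thesis by simp
qed

lemma dyck_weight_volterra_deriv:
  fixes u :: "int \<Rightarrow> real \<Rightarrow> real"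
  assumes volterra: "\<And>j t. 0 \<le> t \<Longrightarrow>
      (u j has_real_derivative u j t * (u (j + 1) t - u (j - 1) t)) (at t within {0..})"
    and u0: "u 0 t = 0"
    and t: "0 \<le> t"
  shows "((\<lambda>t. dyck_weight (\<lambda>h. u (int h) t) n h) has_real_derivative
      u (int h + 1) t * u (int h + 2) t * dyck_weight (\<lambda>h. u (int h) t) n (h + 2))
    (at t within {0..})"
proof (induction n arbitrary: h)
  case 0
  then show ?case by simp
next
  case (Suc n)
  let ?W = "\<lambda>t h. u (int h) t"
  have down: "((\<lambda>t. if h = 0 then 0 else dyck_weight (?W t) n (h - 1)) has_real_derivative
      (if h = 0 then 0 else u (int h) t * u (int h + 1) t * dyck_weight (?W t) n (h + 1)))
      (at t within {0..})"
  proof (cases "h = 0")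
    case False
    then have "h - 1 + 2 = h + 1" "int (h - 1) + 1 = int h" "int (h - 1) + 2 = int h + 1" by auto
    with Suc.IH[of "h - 1"] False show ?thesis by (simp add: add.commute)
  qed simp
  have weight: "((\<lambda>t. u (int (h + 1)) t) has_real_derivative
      u (int h + 1) t * (u (int h + 2) t - u (int h) t)) (at t within {0..})"
    using volterra[OF t, of "int h + 1"] by (simp add: ac_simps)
  have "((\<lambda>t. dyck_weight (?W t) (Suc n) h) has_real_derivative
      (if h = 0 then 0 else u (int h) t * u (int h + 1) t * dyck_weight (?W t) n (h + 1))
      + (u (int h + 1) t * (u (int h + 2) t - u (int h) t) * dyck_weight (?W t) n (h + 1)
         + u (int (h + 1) + 1) t * u (int (h + 1) + 2) t * dyck_weight (?W t) n (h + 1 + 2)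
           * u (int (h + 1)) t))
    (at t within {0..})"
    unfolding dyck_weight.simps by (intro DERIV_add DERIV_mult down weight Suc.IH)
  txt \<open>The two terms \<open>\<plusminus>u\<^sub>h u\<^sub>h\<^sub>+\<^sub>1 dyck_weight _ n (h + 1)\<close>, from the last down step
    and from the derivative of the weight \<open>u\<^sub>h\<^sub>+\<^sub>1\<close>, cancel (for \<open>h = 0\<close> since \<open>u\<^sub>0 = 0\<close>).\<close>
  moreover have "(if h = 0 then 0 else u (int h) t * u (int h + 1) t * dyck_weight (?W t) n (h + 1))
      + (u (int h + 1) t * (u (int h + 2) t - u (int h) t) * dyck_weight (?W t) n (h + 1)
         + u (int (h + 1) + 1) t * u (int (h + 1) + 2) t * dyck_weight (?W t) n (h + 1 + 2)
           * u (int (h + 1)) t)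
    = u (int h + 1) t * u (int h + 2) t * dyck_weight (?W t) (Suc n) (h + 2)"
    using u0 by (auto simp: algebra_simps)
  ultimately show ?case by simp
qed

section \<open>Moments of 2-periodic weights\<close>

definition alt_weight :: "real \<Rightarrow> real \<Rightarrow> nat \<Rightarrow> real" where
  "alt_weight p q h = (if odd h then p else q)"

definition alt_moment :: "real \<Rightarrow> real \<Rightarrow> nat \<Rightarrow> real" where
  "alt_moment p q k = dyck_weight (alt_weight p q) (2 * k) 0"

lemma alt_weight_Suc: "(\<lambda>h. alt_weight p q (Suc h)) = alt_weight q p"
  by (auto simp: alt_weight_def)

lemma alt_moment_0: "alt_moment p q 0 = 1"
  by (simp add: alt_moment_def)

lemma abs_alt_moment_le:
  assumes "\<bar>p\<bar> \<le> K" "\<bar>q\<bar> \<le> K" "1 \<le> K"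
  shows "\<bar>alt_moment p q k\<bar> \<le> ((2 * K)\<^sup>2) ^ k"
  unfolding alt_moment_def power_mult[symmetric] mult.commute[of 2 k]
  by (rule abs_dyck_weight_le) (use assms in \<open>auto simp: alt_weight_def\<close>)

lemma alt_moment_nonneg: "0 \<le> p \<Longrightarrow> 0 \<le> q \<Longrightarrow> 0 \<le> alt_moment p q k"
  unfolding alt_moment_def by (rule dyck_weight_nonneg) (simp add: alt_weight_def)

lemma alt_moment_Suc:
  "alt_moment p q (Suc k) = p * (\<Sum>i\<le>k. alt_moment p q i * alt_moment q p (k - i))"
  unfolding alt_moment_def dyck_weight_even_Suc alt_weight_Suc by (simp add: alt_weight_def)

lemma fps_alt_moment:
  "Abs_fps (alt_moment p q) =
     1 + fps_const p * fps_X * (Abs_fps (alt_moment p q) * Abs_fps (alt_moment q p))"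
proof (rule fps_ext)
  fix n
  have "alt_moment p q (Suc k) = p * fps_nth (Abs_fps (alt_moment p q) * Abs_fps (alt_moment q p)) k"
    for k
    by (simp add: fps_mult_nth atLeast0AtMost alt_moment_Suc)
  then show "fps_nth (Abs_fps (alt_moment p q)) n = fps_nth (1 + fps_const p * fps_X *
      (Abs_fps (alt_moment p q) * Abs_fps (alt_moment q p))) n"
    by (cases n) (simp_all add: alt_moment_0 mult.assoc)
qed

lemma fps_alt_moment_quadratic:
  fixes q :: real
  defines "A \<equiv> Abs_fps (alt_moment 1 q)" and "Q \<equiv> fps_const q"
  shows "Q * fps_X * A\<^sup>2 - (1 - (1 - Q) * fps_X) * A + 1 = 0"
proof -
  define B where "B = Abs_fps (alt_moment q 1)"
  have "A = 1 + fps_X * (A * B)"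
    using fps_alt_moment[of 1 q] unfolding A_def B_def by simp
  moreover have "B = 1 + Q * fps_X * (B * A)"
    using fps_alt_moment[of q 1] unfolding A_def B_def Q_def .
  ultimately show ?thesis by algebra
qed

text \<open>With \<open>D = 2QXA - 1 + (1 - Q)X\<close> the quadratic equation reads \<open>D\<^sup>2 = \<Delta>\<close>;
  differentiating and multiplying by \<open>D\<close> gives a linear first-order equation for \<open>A\<close>.\<close>
lemma fps_alt_moment_ode:
  fixes q :: real
  defines "A \<equiv> Abs_fps (alt_moment 1 q)" and "Q \<equiv> fps_const q"
  defines "D \<equiv> 2 * Q * fps_X * A - 1 + (1 - Q) * fps_X"
    and "\<Delta> \<equiv> 1 - 2 * (1 + Q) * fps_X + (1 - Q)\<^sup>2 * fps_X\<^sup>2"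
  shows "2 * \<Delta> * fps_deriv D = fps_deriv \<Delta> * D"
proof -
  have sq: "\<Delta> = D * D"
    using fps_alt_moment_quadratic[of q] unfolding A_def[symmetric] Q_def[symmetric] D_def \<Delta>_def
    by algebra
  then have "fps_deriv \<Delta> = 2 * D * fps_deriv D"
    by (simp add: fps_deriv_mult algebra_simps)
  then show ?thesis unfolding sq by (simp add: algebra_simps)
qed

lemma alt_moment_recurrence:
  fixes q :: real
  assumes q: "q \<noteq> 0"
  shows "(n + 4) * alt_moment 1 q (n + 3) =
    (1 + q) * (2 * n + 5) * alt_moment 1 q (n + 2) - (1 - q)\<^sup>2 * (n + 1) * alt_moment 1 q (n + 1)"
proof -
  let ?A = "Abs_fps (alt_moment 1 q)" and ?Q = "fps_const q"
  let ?D = "2 * ?Q * fps_X * ?A - 1 + (1 - ?Q) * fps_X"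
    and ?\<Delta> = "1 - 2 * (1 + ?Q) * fps_X + (1 - ?Q)\<^sup>2 * fps_X\<^sup>2"
  have "fps_nth (2 * ?\<Delta> * fps_deriv ?D - fps_deriv ?\<Delta> * ?D) (n + 3) = 0"
    by (simp only: fps_alt_moment_ode[of q] diff_self) simp
  then have "4 * q * ((n + 4) * alt_moment 1 q (n + 3) - ((1 + q) * (2 * n + 5) * alt_moment 1 q (n + 2)
      - (1 - q)\<^sup>2 * (n + 1) * alt_moment 1 q (n + 1))) = 0"
    by (simp add: numeral_fps_const power2_eq_square ring_distribs mult.assoc eval_nat_numeral
        del: fps_const_mult)
  then show ?thesis using q by simp
qed

section \<open>The confluent hypergeometric side\<close>

definition hyp_coeff :: "real \<Rightarrow> nat \<Rightarrow> real" where
  "hyp_coeff c n = pochhammer (3/2) n / pochhammer 3 n / fact n * (4 * c) ^ n"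

lemma hyp_coeff_0: "hyp_coeff c 0 = 1"
  by (simp add: hyp_coeff_def)

lemma hyp_coeff_Suc:
  "(real n + 1) * (real n + 3) * hyp_coeff c (Suc n) = 2 * c * (2 * real n + 3) * hyp_coeff c n"
proof -
  have regroup: "P * a / (Q * b) / (m * F) * (x * X) = P / Q / F * X * (a * x / (b * m))"
    for P Q F X a b m x :: real
    by (simp add: divide_inverse inverse_mult_distrib ac_simps)
  have "hyp_coeff c (Suc n) =
      hyp_coeff c n * ((real n + 3/2) * (4 * c) / ((real n + 3) * (real n + 1)))"
    unfolding hyp_coeff_def pochhammer_Suc fact_Suc power_Suc regroup by (simp add: ac_simps)
  moreover have "(real n + 3) * (real n + 1) \<noteq> 0"
    by (simp add: add_nonneg_eq_0_iff)
  ultimately have "(real n + 3) * (real n + 1) * hyp_coeff c (Suc n) =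
      hyp_coeff c n * ((real n + 3/2) * (4 * c))"
    by simp
  then show ?thesis by (simp add: algebra_simps)
qed

lemma fps_hyp_coeff_ode:
  fixes c :: real
  defines "W \<equiv> Abs_fps (hyp_coeff c)"
  shows "fps_X * fps_deriv (fps_deriv W) + 3 * fps_deriv W
    - fps_const (4 * c) * fps_X * fps_deriv W - fps_const (6 * c) * W = 0"
proof (rule fps_ext)
  fix n
  show "fps_nth (fps_X * fps_deriv (fps_deriv W) + 3 * fps_deriv W
      - fps_const (4 * c) * fps_X * fps_deriv W - fps_const (6 * c) * W) n = fps_nth 0 n"
  proof (cases n)
    case 0
    then show ?thesis
      using hyp_coeff_Suc[of 0 c] by (simp add: W_def numeral_fps_const hyp_coeff_0)
  next
    case (Suc m)
    have "(m + 1) * (m + 2) * hyp_coeff c (m + 2) + 3 * (m + 2) * hyp_coeff c (m + 2)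
        - 4 * c * (m + 1) * hyp_coeff c (m + 1) - 6 * c * hyp_coeff c (m + 1) = 0"
      using hyp_coeff_Suc[of "m + 1" c] by (simp add: algebra_simps eval_nat_numeral)
    then show ?thesis using Suc
      by (simp add: W_def numeral_fps_const mult.assoc algebra_simps eval_nat_numeral
          del: fps_const_mult)
  qed
qed

text \<open>Multiplying by \<open>exp ((c - 1)\<^sup>2 x)\<close> turns the confluent equation into one whose
  coefficient recurrence matches that of \<open>alt_moment\<close>.\<close>
lemma fps_hyp_exp_ode:
  fixes c :: real
  defines "G \<equiv> Abs_fps (hyp_coeff c) * fps_exp ((c - 1)\<^sup>2)"
  shows "fps_X * fps_deriv (fps_deriv G) + 3 * fps_deriv G - fps_const (2 * (1 + c\<^sup>2)) * fps_X * fps_deriv G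
    + fps_const ((1 - c\<^sup>2)\<^sup>2) * fps_X * G - fps_const (3 * (1 + c\<^sup>2)) * G = 0"
proof -
  define C where "C = (fps_const c :: real fps)"
  define W where "W = Abs_fps (hyp_coeff c)"
  define E where "E = fps_exp ((c - 1)\<^sup>2 :: real)"
  define K where "K = fps_const ((c - 1)\<^sup>2 :: real)"
  have const_eqs: "K = (C - 1)\<^sup>2" "fps_const (2 * (1 + c\<^sup>2)) = 2 * (1 + C\<^sup>2)"
    "fps_const ((1 - c\<^sup>2)\<^sup>2) = (1 - C\<^sup>2)\<^sup>2" "fps_const (3 * (1 + c\<^sup>2)) = 3 * (1 + C\<^sup>2)"
    "fps_const (4 * c) = 4 * C" "fps_const (6 * c) = 6 * C"
    by (rule fps_ext, simp add: K_def C_def numeral_fps_const power2_eq_square algebra_simps)+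
  have dE: "fps_deriv E = K * E" unfolding E_def K_def by simp
  have W_ode: "fps_X * fps_deriv (fps_deriv W) + 3 * fps_deriv W - 4 * C * fps_X * fps_deriv W
      - 6 * C * W = 0"
    using fps_hyp_coeff_ode[of c] unfolding W_def const_eqs .
  have dG: "fps_deriv G = fps_deriv W * E + W * (K * E)"
    unfolding G_def W_def[symmetric] E_def[symmetric] by (simp add: dE)
  have ddG: "fps_deriv (fps_deriv G) = fps_deriv (fps_deriv W) * E + 2 * fps_deriv W * (K * E)
      + W * (K * (K * E))"
    unfolding dG by (simp add: dE K_def algebra_simps)
  show ?thesis
    unfolding ddG unfolding dG unfolding G_def W_def[symmetric] E_def[symmetric] const_eqs
    using W_ode by algebra
qed

lemma fps_ode_coeff_recurrence:
  fixes F :: "real fps"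
  assumes ode: "fps_X * fps_deriv (fps_deriv F) + 3 * fps_deriv F - fps_const a * fps_X * fps_deriv F
      + fps_const b * fps_X * F - fps_const d * F = 0"
  shows "(real k + 2) * (real k + 4) * fps_nth F (k + 2) =
      (a * (real k + 1) + d) * fps_nth F (k + 1) - b * fps_nth F k"
    and "3 * fps_nth F 1 = d * fps_nth F 0"
proof -
  let ?L = "fps_X * fps_deriv (fps_deriv F) + 3 * fps_deriv F - fps_const a * fps_X * fps_deriv F
      + fps_const b * fps_X * F - fps_const d * F"
  have "fps_nth ?L (Suc k) = 0" by (simp only: ode fps_zero_nth)
  then show "(real k + 2) * (real k + 4) * fps_nth F (k + 2) =
      (a * (real k + 1) + d) * fps_nth F (k + 1) - b * fps_nth F k"
    by (simp add: numeral_fps_const mult.assoc eval_nat_numeral del: fps_const_mult)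
       (simp add: algebra_simps)
  have "fps_nth ?L 0 = 0" by (simp only: ode fps_zero_nth)
  then show "3 * fps_nth F 1 = d * fps_nth F 0"
    by (simp add: numeral_fps_const mult.assoc del: fps_const_mult)
qed

definition hyp_exp_coeff :: "real \<Rightarrow> nat \<Rightarrow> real" where
  "hyp_exp_coeff c k = fps_nth (Abs_fps (hyp_coeff c) * fps_exp ((c - 1)\<^sup>2)) k"

lemma hyp_exp_coeff_0: "hyp_exp_coeff c 0 = 1"
  by (simp add: hyp_exp_coeff_def hyp_coeff_0)

lemma hyp_exp_coeff_1: "hyp_exp_coeff c 1 = 1 + c\<^sup>2"
  using fps_ode_coeff_recurrence(2)[OF fps_hyp_exp_ode[of c]]
  unfolding hyp_exp_coeff_def[symmetric] hyp_exp_coeff_0 by simp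

lemma hyp_exp_coeff_recurrence:
  "(k + 2) * (k + 4) * hyp_exp_coeff c (k + 2) =
     (1 + c\<^sup>2) * (2 * k + 5) * hyp_exp_coeff c (k + 1) - (1 - c\<^sup>2)\<^sup>2 * hyp_exp_coeff c k"
  using fps_ode_coeff_recurrence(1)[OF fps_hyp_exp_ode[of c], of k]
  unfolding hyp_exp_coeff_def[symmetric] by (simp add: algebra_simps)

lemma alt_moment_Suc_eq_hyp_exp_coeff:
  fixes c :: real
  assumes c: "c \<noteq> 0"
  shows "alt_moment 1 (c\<^sup>2) (Suc k) = fact k * hyp_exp_coeff c k"
proof -
  let ?a = "alt_moment 1 (c\<^sup>2)" and ?g = "hyp_exp_coeff c"
  have "?a (Suc k) = fact k * ?g k \<and> ?a (Suc (Suc k)) = fact (Suc k) * ?g (Suc k)"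
  proof (induction k)
    case 0
    have "?a 1 = 1" "?a 2 = 1 + c\<^sup>2"
      by (simp_all add: alt_moment_def alt_weight_def eval_nat_numeral)
    then show ?case
      by (simp add: hyp_exp_coeff_0 hyp_exp_coeff_1[unfolded One_nat_def] numeral_2_eq_2)
  next
    case (Suc k)
    have IH: "?a (k + 1) = fact k * ?g k" "?a (k + 2) = (real k + 1) * fact k * ?g (k + 1)"
      using Suc.IH by (simp_all add: eval_nat_numeral algebra_simps)
    have "(real k + 4) * ?a (k + 3) = (1 + c\<^sup>2) * (2 * real k + 5) * ?a (k + 2)
        - (1 - c\<^sup>2)\<^sup>2 * (real k + 1) * ?a (k + 1)"
      using alt_moment_recurrence[of "c\<^sup>2" k] c by simp
    also have "\<dots> = (real k + 1) * fact k *
        ((1 + c\<^sup>2) * (2 * real k + 5) * ?g (k + 1) - (1 - c\<^sup>2)\<^sup>2 * ?g k)"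
      unfolding IH by (simp add: algebra_simps)
    also have "\<dots> = (real k + 1) * fact k * ((real k + 2) * (real k + 4) * ?g (k + 2))"
      unfolding hyp_exp_coeff_recurrence ..
    also have "\<dots> = (real k + 4) * (fact (k + 2) * ?g (k + 2))"
      by (simp add: algebra_simps eval_nat_numeral)
    finally have "?a (k + 3) = fact (k + 2) * ?g (k + 2)"
      by simp
    then show ?case using Suc.IH by (simp add: eval_nat_numeral)
  qed
  then show ?thesis by simp
qed

lemma abs_hyp_coeff_le: "\<bar>hyp_coeff c n\<bar> \<le> \<bar>4 * c\<bar> ^ n / fact n"
proof -
  have "0 < pochhammer (3/2::real) n \<and> pochhammer (3/2::real) n \<le> pochhammer 3 n"
  proof (induction n)
    case (Suc n)
    then show ?case
      unfolding pochhammer_Suc by (intro conjI mult_pos_pos mult_mono) auto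
  qed simp
  then have pos: "0 < pochhammer (3/2::real) n" "0 < pochhammer (3::real) n"
    and ratio: "pochhammer (3/2) n / pochhammer 3 n \<le> (1::real)"
    by auto
  have "\<bar>hyp_coeff c n\<bar> = pochhammer (3/2) n / pochhammer 3 n * (\<bar>4 * c\<bar> ^ n / fact n)"
    by (simp add: hyp_coeff_def abs_mult power_abs abs_of_pos[OF pos(1)] abs_of_pos[OF pos(2)])
  also have "\<dots> \<le> 1 * (\<bar>4 * c\<bar> ^ n / fact n)"
    using ratio by (intro mult_right_mono) auto
  finally show ?thesis by simp
qed

lemma summable_hyp_coeff: "summable (\<lambda>n. norm (hyp_coeff c n * x ^ n))"
proof (rule summable_comparison_test[OF _ summable_exp[of "\<bar>4 * c * x\<bar>"]])
  have "norm (hyp_coeff c n * x ^ n) \<le> \<bar>4 * c\<bar> ^ n / fact n * \<bar>x\<bar> ^ n" for n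
    unfolding real_norm_def abs_mult[of "hyp_coeff c n"] power_abs
    by (rule mult_right_mono[OF abs_hyp_coeff_le]) simp
  then show "\<exists>N. \<forall>n\<ge>N. norm (norm (hyp_coeff c n * x ^ n)) \<le> inverse (fact n) * \<bar>4 * c * x\<bar> ^ n"
    by (auto simp: abs_mult power_mult_distrib divide_inverse mult_ac)
qed

lemma hyp_coeff_sums: "(\<lambda>n. hyp_coeff c n * x ^ n) sums hyp1F1 (3/2) 3 (4 * c * x)"
proof -
  have "(\<lambda>n. pochhammer (3/2) n / pochhammer 3 n * (4 * c * x) ^ n / fact n)
      = (\<lambda>n. hyp_coeff c n * x ^ n)"
    by (auto simp: hyp_coeff_def power_mult_distrib)
  then show ?thesis
    unfolding hyp1F1_def using summable_norm_cancel[OF summable_hyp_coeff]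
    by (simp add: summable_sums)
qed

lemma hyp_exp_coeff_sums:
  "(\<lambda>k. hyp_exp_coeff c k * x ^ k) sums (hyp1F1 (3/2) 3 (4 * c * x) * exp ((c - 1)\<^sup>2 * x))"
proof -
  let ?a = "\<lambda>i. hyp_coeff c i * x ^ i" and ?b = "\<lambda>j. inverse (fact j) * ((c - 1)\<^sup>2 * x) ^ j"
  have "summable (\<lambda>j. norm (?b j))"
    using summable_exp[of "\<bar>(c - 1)\<^sup>2 * x\<bar>"] by (simp add: abs_mult power_abs)
  then have "(\<lambda>k. \<Sum>i\<le>k. ?a i * ?b (k - i)) sums (suminf ?a * suminf ?b)"
    by (rule Cauchy_product_sums[OF summable_hyp_coeff])
  moreover have "suminf ?a = hyp1F1 (3/2) 3 (4 * c * x)"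
    using hyp_coeff_sums by (simp add: sums_iff)
  moreover have "suminf ?b = exp ((c - 1)\<^sup>2 * x)"
    using exp_converges[of "(c - 1)\<^sup>2 * x"] by (simp add: sums_iff divide_inverse mult.commute)
  moreover have "(\<Sum>i\<le>k. ?a i * ?b (k - i)) = hyp_exp_coeff c k * x ^ k" for k
  proof -
    have "(\<Sum>i\<le>k. ?a i * ?b (k - i)) = (\<Sum>i\<le>k. hyp_coeff c i * ((c - 1)\<^sup>2 ^ (k - i) / fact (k - i)) * x ^ k)"
      by (intro sum.cong refl) (auto simp: power_mult_distrib divide_inverse mult_ac simp flip: power_add)
    then show ?thesis
      by (simp add: hyp_exp_coeff_def fps_mult_nth atLeast0AtMost sum_distrib_right)
  qed
  ultimately show ?thesis by simp
qed

section \<open>Exponential generating functions\<close>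

definition egf_shift :: "(nat \<Rightarrow> real) \<Rightarrow> nat \<Rightarrow> real \<Rightarrow> real" where
  "egf_shift a k t = (\<Sum>j. a (j + k) / fact j * t ^ j)"

context
  fixes a :: "nat \<Rightarrow> real" and R :: real
  assumes a_bound: "\<And>n. \<bar>a n\<bar> \<le> R ^ n"
begin

lemma egf_shift_term_bound:
  "norm (a (j + k) / fact j * t ^ j) \<le> R ^ k * (inverse (fact j) * (R * \<bar>t\<bar>) ^ j)"
proof -
  have "\<bar>a (j + k)\<bar> * (inverse (fact j) * \<bar>t\<bar> ^ j) \<le> (R ^ j * R ^ k) * (inverse (fact j) * \<bar>t\<bar> ^ j)"
    using a_bound[of "j + k"] by (intro mult_right_mono) (auto simp: power_add)
  then show ?thesis
    by (simp add: abs_mult power_abs divide_inverse power_mult_distrib algebra_simps)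
qed

lemma summable_egf_shift: "summable (\<lambda>j. norm (a (j + k) / fact j * t ^ j))"
  by (rule summable_comparison_test[OF _ summable_mult[OF summable_exp]])
     (use egf_shift_term_bound in auto)

lemma abs_egf_shift_le: "\<bar>egf_shift a k t\<bar> \<le> R ^ k * exp (R * \<bar>t\<bar>)"
proof -
  have exp_sums: "(\<lambda>j. R ^ k * (inverse (fact j) * (R * \<bar>t\<bar>) ^ j)) sums (R ^ k * exp (R * \<bar>t\<bar>))"
    using sums_mult[OF exp_converges[of "R * \<bar>t\<bar>"], of "R ^ k"] by (simp add: divide_inverse mult.commute)
  have "norm (egf_shift a k t) \<le> (\<Sum>j. R ^ k * (inverse (fact j) * (R * \<bar>t\<bar>) ^ j))"
    unfolding egf_shift_def
    by (rule norm_suminf_le) (use egf_shift_term_bound exp_sums in \<open>auto simp: sums_iff\<close>)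
  then show ?thesis using exp_sums by (simp add: sums_iff)
qed

lemma egf_shift_has_derivative:
  "(egf_shift a k has_real_derivative egf_shift a (Suc k) t) (at t)"
proof -
  have "diffs (\<lambda>j. a (j + k) / fact j) = (\<lambda>j. a (j + Suc k) / fact j)"
    by (auto simp: diffs_def fact_Suc simp del: of_nat_Suc)
  moreover have "((\<lambda>t. \<Sum>j. a (j + k) / fact j * t ^ j) has_field_derivative
      (\<Sum>j. diffs (\<lambda>j. a (j + k) / fact j) j * t ^ j)) (at t)"
    by (rule termdiffs_strong_converges_everywhere) (rule summable_norm_cancel[OF summable_egf_shift])
  ultimately show ?thesis unfolding egf_shift_def by simp
qed

lemma egf_shift_ge:
  assumes "\<And>n. 0 \<le> a n" and "0 \<le> t"
  shows "a k \<le> egf_shift a k t"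
proof -
  have "(\<Sum>j\<in>{0}. a (j + k) / fact j * t ^ j) \<le> egf_shift a k t"
    unfolding egf_shift_def using assms
    by (intro sum_le_suminf summable_norm_cancel[OF summable_egf_shift]) auto
  then show ?thesis by simp
qed

end

lemma egf_shift_0: "egf_shift a k 0 = a k"
  unfolding egf_shift_def using powser_zero[of "\<lambda>j. a (j + k) / fact j"] by simp

lemma egf_shift_alt_moment_1:
  assumes "0 < q"
  shows "egf_shift (alt_moment 1 q) 1 x = hyp1F1 (3/2) 3 (4 * sqrt q * x) * exp ((sqrt q - 1)\<^sup>2 * x)"
proof -
  have "alt_moment 1 q (j + 1) = fact j * hyp_exp_coeff (sqrt q) j" for j
    using alt_moment_Suc_eq_hyp_exp_coeff[of "sqrt q" j] assms by simp
  then show ?thesis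
    using hyp_exp_coeff_sums[of "sqrt q" x] by (simp add: egf_shift_def sums_iff)
qed

section \<open>Uniqueness for the moment hierarchy\<close>

lemma increment_le_of_deriv_le:
  fixes f g f' g' :: "real \<Rightarrow> real"
  assumes df: "\<And>s. 0 \<le> s \<Longrightarrow> s \<le> t \<Longrightarrow> (f has_real_derivative f' s) (at s within {0..})"
    and dg: "\<And>s. 0 \<le> s \<Longrightarrow> s \<le> t \<Longrightarrow> (g has_real_derivative g' s) (at s within {0..})"
    and le: "\<And>s. 0 \<le> s \<Longrightarrow> s \<le> t \<Longrightarrow> f' s \<le> g' s"
    and t: "0 \<le> t"
  shows "f t - f 0 \<le> g t - g 0"
proof -
  have d: "((\<lambda>s. g s - f s) has_real_derivative g' s - f' s) (at s within {0..})"
    if "0 \<le> s" "s \<le> t" for s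
    using that by (intro DERIV_diff df dg)
  have "g 0 - f 0 \<le> g t - f t"
  proof (rule DERIV_nonneg_imp_increasing_open[OF t])
    fix s :: real assume s: "0 < s" "s < t"
    then have "at s within {0::real..} = at s"
      by (intro at_within_interior) (auto simp: interior_real_atLeast)
    then show "\<exists>y. ((\<lambda>s. g s - f s) has_real_derivative y) (at s) \<and> 0 \<le> y"
      using d[of s] le[of s] s by auto
  next
    show "continuous_on {0..t} (\<lambda>s. g s - f s)"
      by (rule DERIV_continuous_on[OF DERIV_subset[OF d]]) auto
  qed
  then show ?thesis by simp
qed

lemma abs_le_power_of_abs_deriv_le:
  fixes f f' :: "real \<Rightarrow> real"
  assumes df: "\<And>s. 0 \<le> s \<Longrightarrow> s \<le> t \<Longrightarrow> (f has_real_derivative f' s) (at s within {0..})"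
    and f0: "f 0 = 0"
    and le: "\<And>s. 0 \<le> s \<Longrightarrow> s \<le> t \<Longrightarrow> \<bar>f' s\<bar> \<le> M * s ^ n / fact n"
    and t: "0 \<le> t"
  shows "\<bar>f t\<bar> \<le> M * t ^ Suc n / fact (Suc n)"
proof -
  define g where "g s = M * s ^ Suc n / fact (Suc n)" for s :: real
  have dg: "(g has_real_derivative M * s ^ n / fact n) (at s within {0..})" for s
  proof -
    have "(g has_real_derivative M * (real (Suc n) * s ^ n) / fact (Suc n)) (at s within {0..})"
      unfolding g_def by (intro derivative_eq_intros) auto
    then show ?thesis by (simp add: fact_Suc del: of_nat_Suc)
  qed
  have "f t - f 0 \<le> g t - g 0"
    by (rule increment_le_of_deriv_le[OF df dg _ t]) (use le in \<open>auto simp: abs_le_iff\<close>)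
  moreover have "(\<lambda>s. - f s) t - (\<lambda>s. - f s) 0 \<le> g t - g 0"
    by (rule increment_le_of_deriv_le[OF DERIV_minus[OF df] dg _ t])
       (use le in \<open>auto simp: abs_le_iff\<close>)
  ultimately show ?thesis using f0 by (simp add: g_def abs_le_iff)
qed

text \<open>Iterating \<open>abs_le_power_of_abs_deriv_le\<close> gives
  \<open>|F\<^sub>k(t)| \<le> C R\<^sup>k (2Rt)\<^sup>n / n!\<close> for every \<open>n\<close>.\<close>
lemma hierarchy_vanishes:
  fixes F F' :: "nat \<Rightarrow> real \<Rightarrow> real"
  assumes R: "0 \<le> R"
    and dF: "\<And>k s. 0 \<le> s \<Longrightarrow> s \<le> T \<Longrightarrow> (F k has_real_derivative F' k s) (at s within {0..})"
    and F0: "\<And>k. F k 0 = 0"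
    and bound: "\<And>k s. 0 \<le> s \<Longrightarrow> s \<le> T \<Longrightarrow> \<bar>F k s\<bar> \<le> C * R ^ k"
    and deriv_bound: "\<And>k s. 0 \<le> s \<Longrightarrow> s \<le> T \<Longrightarrow>
      \<bar>F' k s\<bar> \<le> \<bar>F (Suc k) s\<bar> + R ^ k * \<bar>F 1 s\<bar>"
    and t: "0 \<le> t" "t \<le> T"
  shows "F k t = 0"
proof -
  have iterated: "\<bar>F k s\<bar> \<le> C * R ^ k * (2 * R) ^ n * s ^ n / fact n"
    if "0 \<le> s" "s \<le> T" for n k s
    using that
  proof (induction n arbitrary: k s)
    case 0
    then show ?case using bound by simp
  next
    case (Suc n)
    show ?case
    proof (rule abs_le_power_of_abs_deriv_le[OF dF F0 _ Suc.prems(1)])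
      fix x assume x: "0 \<le> x" "x \<le> s"
      have "\<bar>F' k x\<bar> \<le> \<bar>F (Suc k) x\<bar> + R ^ k * \<bar>F 1 x\<bar>"
        using deriv_bound x Suc.prems by auto
      also have "\<dots> \<le> C * R ^ Suc k * (2 * R) ^ n * x ^ n / fact n
                     + R ^ k * (C * R ^ 1 * (2 * R) ^ n * x ^ n / fact n)"
        using Suc.IH[of x "Suc k"] Suc.IH[of x 1] x Suc.prems R
        by (intro add_mono mult_left_mono) auto
      also have "\<dots> = C * R ^ k * (2 * R) ^ Suc n * x ^ n / fact n"
        by (simp add: algebra_simps)
      finally show "\<bar>F' k x\<bar> \<le> C * R ^ k * (2 * R) ^ Suc n * x ^ n / fact n" .
    qed (use Suc.prems in auto)
  qed
  have "(\<lambda>n. C * R ^ k * (inverse (fact n) * (2 * R * t) ^ n)) \<longlonglongrightarrow> 0"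
    using tendsto_mult_left[OF summable_LIMSEQ_zero[OF summable_exp], of "C * R ^ k"] by simp
  moreover have "\<bar>F k t\<bar> \<le> C * R ^ k * (inverse (fact n) * (2 * R * t) ^ n)" for n
    using iterated[OF t, of k n] by (simp add: power_mult_distrib divide_inverse mult_ac)
  ultimately have "\<bar>F k t\<bar> \<le> 0"
    by (intro LIMSEQ_le_const) auto
  then show ?thesis by simp
qed

lemma linear_ode_vanishes:
  fixes y a :: "real \<Rightarrow> real"
  assumes dy: "\<And>s. 0 \<le> s \<Longrightarrow> (y has_real_derivative a s * y s) (at s within {0..})"
    and a: "\<And>s. 0 \<le> s \<Longrightarrow> \<bar>a s\<bar> \<le> A"
    and y: "\<And>s. 0 \<le> s \<Longrightarrow> \<bar>y s\<bar> \<le> B"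
    and y0: "y 0 = 0"
    and t: "0 \<le> t"
  shows "y t = 0"
proof -
  have A: "0 \<le> A" using a[of 0] by simp
  have "A ^ 0 * y t = 0"
  proof (rule hierarchy_vanishes[where F = "\<lambda>k s. A ^ k * y s" and F' = "\<lambda>k s. A ^ k * (a s * y s)"
        and C = B and T = t, OF A _ _ _ _ t order_refl])
    fix k :: nat and s :: real assume s: "0 \<le> s" "s \<le> t"
    show "((\<lambda>s. A ^ k * y s) has_real_derivative A ^ k * (a s * y s)) (at s within {0..})"
      using dy s by (intro DERIV_cmult) auto
    show "\<bar>A ^ k * y s\<bar> \<le> B * A ^ k"
      using y[of s] s A by (simp add: abs_mult mult.commute mult_right_mono)
    have "\<bar>A ^ k * (a s * y s)\<bar> \<le> A ^ k * (A * \<bar>y s\<bar>)"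
      using a[of s] s A by (simp add: abs_mult mult_left_mono mult_right_mono)
    also have "\<dots> \<le> \<bar>A ^ Suc k * y s\<bar> + A ^ k * \<bar>A ^ 1 * y s\<bar>"
      using A by (simp add: abs_mult)
    finally show "\<bar>A ^ k * (a s * y s)\<bar> \<le> \<bar>A ^ Suc k * y s\<bar> + A ^ k * \<bar>A ^ 1 * y s\<bar>" .
  qed (use y0 in simp)
  then show ?thesis by simp
qed

lemma moment_hierarchy_unique:
  fixes m S :: "nat \<Rightarrow> real \<Rightarrow> real"
  assumes dm: "\<And>k s. 0 \<le> s \<Longrightarrow>
      (m k has_real_derivative m (Suc k) s - m 1 s * m k s) (at s within {0..})"
    and dS: "\<And>k s. 0 \<le> s \<Longrightarrow> (S k has_real_derivative S (Suc k) s) (at s within {0..})"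
    and init: "\<And>k. m k 0 = S k 0" "S 0 0 = 1"
    and m_bound: "\<And>k s. 0 \<le> s \<Longrightarrow> \<bar>m k s\<bar> \<le> R ^ k"
    and S_bound: "\<And>k s. 0 \<le> s \<Longrightarrow> \<bar>S k s\<bar> \<le> R ^ k * exp (R * s)"
    and R: "0 \<le> R" and t: "0 \<le> t"
  shows "m k t * S 0 t = S k t"
proof -
  define F where "F k s = m k s * S 0 s - S k s" for k s
  define F' where "F' k s = (m (Suc k) s - m 1 s * m k s) * S 0 s + m k s * S 1 s - S (Suc k) s"
    for k s
  have "F k t = 0"
  proof (rule hierarchy_vanishes[where F' = F' and C = "2 * exp (R * t)", OF R _ _ _ _ t order_refl])
    fix k :: nat and s :: real assume s: "0 \<le> s" "s \<le> t"
    have "(F k has_real_derivative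
        (m (Suc k) s - m 1 s * m k s) * S 0 s + S 1 s * m k s - S (Suc k) s) (at s within {0..})"
      unfolding F_def using s dS[of s 0] by (intro DERIV_diff DERIV_mult dm dS) simp_all
    then show "(F k has_real_derivative F' k s) (at s within {0..})"
      by (simp add: F'_def mult.commute)
    have E: "exp (R * s) \<le> exp (R * t)" using s R by (simp add: mult_left_mono)
    have "\<bar>F k s\<bar> \<le> \<bar>m k s\<bar> * \<bar>S 0 s\<bar> + \<bar>S k s\<bar>"
      unfolding F_def abs_mult[symmetric] by (rule abs_triangle_ineq4)
    also have "\<dots> \<le> R ^ k * exp (R * t) + R ^ k * exp (R * t)"
      using m_bound[of s k] S_bound[of s 0] S_bound[of s k] E s R
      by (intro add_mono mult_mono order_trans[OF _ mult_left_mono[OF E]]) auto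
    finally show "\<bar>F k s\<bar> \<le> 2 * exp (R * t) * R ^ k" by (simp add: mult_ac)
    have "F' k s = F (Suc k) s - m k s * F 1 s"
      by (simp add: F_def F'_def algebra_simps)
    then have "\<bar>F' k s\<bar> \<le> \<bar>F (Suc k) s\<bar> + \<bar>m k s\<bar> * \<bar>F 1 s\<bar>"
      by (simp add: abs_mult[symmetric])
    also have "\<dots> \<le> \<bar>F (Suc k) s\<bar> + R ^ k * \<bar>F 1 s\<bar>"
      using m_bound[of s k] s by (intro add_left_mono mult_right_mono) auto
    finally show "\<bar>F' k s\<bar> \<le> \<bar>F (Suc k) s\<bar> + R ^ k * \<bar>F 1 s\<bar>" .
  qed (use init in \<open>simp add: F_def\<close>)
  then show ?thesis by (simp add: F_def)
qed

section \<open>The Volterra lattice\<close>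

lemma volterra_moment_deriv:
  fixes u :: "int \<Rightarrow> real \<Rightarrow> real"
  assumes volterra: "\<And>j t. 0 \<le> t \<Longrightarrow>
      (u j has_real_derivative u j t * (u (j + 1) t - u (j - 1) t)) (at t within {0..})"
    and u0: "u 0 t = 0"
    and t: "0 \<le> t"
  defines "m \<equiv> \<lambda>k t. dyck_weight (\<lambda>h. u (int h) t) (2 * k) 0"
  shows "(m k has_real_derivative m (Suc k) t - m 1 t * m k t) (at t within {0..})"
proof -
  have "m (Suc k) t = u 1 t * (m k t + u 2 t * dyck_weight (\<lambda>h. u (int h) t) (2 * k) 2)"
    unfolding m_def by (simp only: mult_Suc_right add_2_eq_Suc dyck_weight_Suc_Suc_0) simp
  moreover have "m 1 t = u 1 t"
    unfolding m_def by (simp add: dyck_weight_2_0)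
  ultimately show ?thesis
    using dyck_weight_volterra_deriv[OF volterra u0 t, of "2 * k" 0]
    by (simp add: m_def algebra_simps)
qed

lemma volterra_u1_egf_shift:
  fixes q :: real and u :: "int \<Rightarrow> real \<Rightarrow> real"
  assumes volterra: "\<And>j t. 0 \<le> t \<Longrightarrow>
      (u j has_real_derivative u j t * (u (j + 1) t - u (j - 1) t)) (at t within {0..})"
    and init: "\<And>j. u j 0 = (if j \<le> 0 then 0 else if odd j then 1 else q)"
    and B: "\<And>j t. 0 \<le> t \<Longrightarrow> \<bar>u j t\<bar> \<le> B"
    and t: "0 \<le> t"
  shows "u 1 t * egf_shift (alt_moment 1 q) 0 t = egf_shift (alt_moment 1 q) 1 t"
proof -
  have B1: "1 \<le> B" and Bq: "\<bar>q\<bar> \<le> B"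
    using B[of 0 1] B[of 0 2] init by simp_all
  have u0: "u 0 s = 0" if "0 \<le> s" for s
  proof (rule linear_ode_vanishes[OF _ _ _ _ that])
    fix s :: real assume s: "0 \<le> s"
    show "(u 0 has_real_derivative (u 1 s - u (- 1) s) * u 0 s) (at s within {0..})"
      using volterra[OF s, of 0] by (simp add: mult.commute)
    show "\<bar>u 1 s - u (- 1) s\<bar> \<le> 2 * B"
      using B[OF s, of 1] B[OF s, of "- 1"] by linarith
  qed (use B init in auto)
  define R where "R = (2 * B)\<^sup>2"
  define m where "m = (\<lambda>k t. dyck_weight (\<lambda>h. u (int h) t) (2 * k) 0)"
  define S where "S = egf_shift (alt_moment 1 q)"
  have a_bound: "\<bar>alt_moment 1 q n\<bar> \<le> R ^ n" for n
    unfolding R_def using B1 Bq by (intro abs_alt_moment_le) auto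
  have "m 1 t * S 0 t = S 1 t"
  proof (rule moment_hierarchy_unique[OF _ _ _ _ _ _ _ t])
    fix k :: nat and s :: real assume s: "0 \<le> s"
    show "(m k has_real_derivative m (Suc k) s - m 1 s * m k s) (at s within {0..})"
      unfolding m_def by (rule volterra_moment_deriv[OF volterra u0[OF s] s])
    show "(S k has_real_derivative S (Suc k) s) (at s within {0..})"
      unfolding S_def by (rule has_field_derivative_at_within[OF egf_shift_has_derivative[OF a_bound]])
    show "\<bar>m k s\<bar> \<le> R ^ k"
      unfolding m_def R_def power_mult[symmetric] mult.commute[of 2 k]
      by (rule abs_dyck_weight_le[OF _ B1]) (use B s in auto)
    show "\<bar>S k s\<bar> \<le> R ^ k * exp (R * s)"
      unfolding S_def using abs_egf_shift_le[OF a_bound, of k s] s by simp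
  next
    fix k
    show "m k 0 = S k 0"
      unfolding m_def S_def egf_shift_0 alt_moment_def
      by (rule dyck_weight_cong) (simp add: init alt_weight_def)
  qed (simp_all add: S_def egf_shift_0 alt_moment_0 R_def)
  moreover have "m 1 t = u 1 t"
    by (simp add: m_def dyck_weight_2_0)
  ultimately show ?thesis by (simp add: S_def)
qed

lemma one_plus_LBINT_hyp1F1_eq_egf_shift:
  assumes q: "0 < q"
  shows "1 + (LBINT x=0..ereal s. hyp1F1 (3/2) 3 (4 * sqrt q * x) * exp ((sqrt q - 1)\<^sup>2 * x))
    = egf_shift (alt_moment 1 q) 0 s"
proof -
  define S where "S = egf_shift (alt_moment 1 q)"
  have a_bound: "\<bar>alt_moment 1 q n\<bar> \<le> ((2 * max 1 q)\<^sup>2) ^ n" for n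
    by (rule abs_alt_moment_le) (use q in auto)
  note dS = egf_shift_has_derivative[OF a_bound, folded S_def]
  have "(LBINT x=ereal 0..ereal s. S 1 x) = S 0 s - S 0 0"
  proof (rule interval_integral_FTC_finite)
    show "continuous_on {min 0 s..max 0 s} (S 1)"
      by (rule DERIV_continuous_on[OF has_field_derivative_at_within[OF dS]])
    show "(S 0 has_vector_derivative S 1 x) (at x within {min 0 s..max 0 s})" for x
      using has_field_derivative_at_within[OF dS]
      by (simp add: has_real_derivative_iff_has_vector_derivative)
  qed
  moreover have "S 0 0 = 1"
    by (simp add: S_def egf_shift_0 alt_moment_0)
  ultimately show ?thesis
    using egf_shift_alt_moment_1[OF q] by (simp add: S_def zero_ereal_def)
qed

theorem proposition11:
  fixes q :: real and u :: "int \<Rightarrow> real \<Rightarrow> real"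
  assumes q_pos: "q > 0"
    and lattice: "\<And>j t. t \<ge> 0 \<Longrightarrow>
        (u j has_real_derivative (u j t * (u (j + 1) t - u (j - 1) t))) (at t within {0..})"
    and init: "\<And>j. u j 0 = (if j \<le> 0 then 0 else if odd j then 1 else q)"
    and bounded: "\<exists>B. \<forall>j t. t \<ge> 0 \<longrightarrow> \<bar>u j t\<bar> \<le> B"
  shows "\<forall>t \<ge> 0.
    (let c = sqrt q;
         f1 = (\<lambda>s::real. 1 + (LBINT x=0..ereal s. hyp1F1 (3/2) 3 (4 * c * x) * exp ((c - 1)^2 * x)))
     in u 1 t = deriv f1 t / f1 t)"
proof (intro allI impI)
  fix t :: real assume t: "0 \<le> t"
  obtain B where B: "\<And>j t. 0 \<le> t \<Longrightarrow> \<bar>u j t\<bar> \<le> B" using bounded by blast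
  define S where "S = egf_shift (alt_moment 1 q)"
  have a_bound: "\<bar>alt_moment 1 q n\<bar> \<le> ((2 * max 1 q)\<^sup>2) ^ n" for n
    by (rule abs_alt_moment_le) (use q_pos in auto)
  have f1: "(\<lambda>s. 1 + (LBINT x=0..ereal s. hyp1F1 (3/2) 3 (4 * sqrt q * x) * exp ((sqrt q - 1)\<^sup>2 * x)))
      = S 0"
    using one_plus_LBINT_hyp1F1_eq_egf_shift[OF q_pos] by (auto simp: S_def)
  have "deriv (S 0) t = S 1 t"
    using DERIV_imp_deriv[OF egf_shift_has_derivative[OF a_bound, where k = 0]] by (simp add: S_def)
  moreover have "alt_moment 1 q 0 \<le> S 0 t"
    unfolding S_def using q_pos by (intro egf_shift_ge[OF a_bound] alt_moment_nonneg t) auto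
  then have "1 \<le> S 0 t"
    by (simp add: alt_moment_0)
  moreover have "u 1 t * S 0 t = S 1 t"
    unfolding S_def by (rule volterra_u1_egf_shift[OF lattice init B t])
  ultimately show "let c = sqrt q;
      f1 = (\<lambda>s::real. 1 + (LBINT x=0..ereal s. hyp1F1 (3/2) 3 (4 * c * x) * exp ((c - 1)^2 * x)))
    in u 1 t = deriv f1 t / f1 t"
    unfolding Let_def f1 using fun_cong[OF f1, of t] by (simp add: field_simps)
qed

end
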